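(* For every first-order formula $\varphi$ of the language of group theory and every evaluation $e:\{x_1,x_2,\dots\}\to\mathbb N$ of its variables, the set $\mathcal S_{\varphi[e]}=\{G\in\mathcal G:\ \overline G\models\varphi[e]\}$ is Borel in $\mathcal G$. Consequently, if $\varphi$ is a sentence, then $\mathcal S_\varphi$ is either meager or comeager in $\mathcal G$.
   Context: Let $\mathbb N=\{1,2,3,\dots\}$. Equip $\mathbb N^{\mathbb N\times\mathbb N}$ with the product topology of the discrete topology on $\mathbb N$. Let $\mathcal G$ be the subspace consisting of those $A\in\mathbb N^{\mathbb N\times\mathbb N}$ that are the multiplication table of a group on the underlying set $\mathbb N$ whose identity element is $1$. For $G\in\mathcal G$, $\overline G$ denotes the group on $\mathbb N$ with multiplication table $G$. The language of group theory has a binary function symbol (multiplication) and a constant symbol $1$, with variables $x_1,x_2,\dots$; $\overline G\models\varphi[e]$ means $\varphi$ is true in $\overline G$ under the variable assignment $e$. *)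

theory Defs
  imports "HOL-Analysis.Analysis"
begin

text \<open>Convention: the underlying set N = {1,2,3,...} is represented by the type nat
  via the bijection k \<mapsto> k+1; thus the HOL value 0 represents the element 1
  (the required identity) and the HOL value k represents k+1.
  A multiplication table is a function A :: nat \<times> nat \<Rightarrow> nat, A(x,y) = x*y.\<close>

definition is_group_table :: "(nat \<times> nat \<Rightarrow> nat) \<Rightarrow> bool" where
  "is_group_table A \<longleftrightarrow>
     (\<forall>x y z. A (A (x, y), z) = A (x, A (y, z))) \<and>
     (\<forall>x. A (0, x) = x \<and> A (x, 0) = x) \<and>
     (\<forall>x. \<exists>y. A (x, y) = 0 \<and> A (y, x) = 0)"

definition table_space :: "(nat \<times> nat \<Rightarrow> nat) topology" where
  "table_space = product_topology (\<lambda>_. discrete_topology (UNIV :: nat set)) UNIV"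

definition GroupTables :: "(nat \<times> nat \<Rightarrow> nat) set" where
  "GroupTables = {A. is_group_table A}"

definition group_space :: "(nat \<times> nat \<Rightarrow> nat) topology" where
  "group_space = subtopology table_space GroupTables"

definition borel_sets_of :: "'a topology \<Rightarrow> 'a set set" where
  "borel_sets_of X = sigma_sets (topspace X) {U. openin X U}"

definition nowhere_dense_in :: "'a topology \<Rightarrow> 'a set \<Rightarrow> bool" where
  "nowhere_dense_in X S \<longleftrightarrow> S \<subseteq> topspace X \<and> X interior_of (X closure_of S) = {}"

definition meager_in :: "'a topology \<Rightarrow> 'a set \<Rightarrow> bool" where
  "meager_in X S \<longleftrightarrow> S \<subseteq> topspace X \<and>
     (\<exists>F :: nat \<Rightarrow> 'a set. (\<forall>n. nowhere_dense_in X (F n)) \<and> S \<subseteq> (\<Union>n. F n))"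

definition comeager_in :: "'a topology \<Rightarrow> 'a set \<Rightarrow> bool" where
  "comeager_in X S \<longleftrightarrow> S \<subseteq> topspace X \<and> meager_in X (topspace X - S)"

datatype gterm = GVar nat | GOne | GMul gterm gterm

datatype gform =
    GEq gterm gterm
  | GFalse
  | GNot gform
  | GAnd gform gform
  | GOr gform gform
  | GImp gform gform
  | GEx nat gform
  | GAll nat gform

primrec term_eval :: "(nat \<times> nat \<Rightarrow> nat) \<Rightarrow> (nat \<Rightarrow> nat) \<Rightarrow> gterm \<Rightarrow> nat" where
  "term_eval A e (GVar i) = e i"
| "term_eval A e GOne = 0"
| "term_eval A e (GMul s t) = A (term_eval A e s, term_eval A e t)"

primrec models :: "(nat \<times> nat \<Rightarrow> nat) \<Rightarrow> gform \<Rightarrow> (nat \<Rightarrow> nat) \<Rightarrow> bool" where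
  "models A (GEq s t) e = (term_eval A e s = term_eval A e t)"
| "models A GFalse e = False"
| "models A (GNot p) e = (\<not> models A p e)"
| "models A (GAnd p q) e = (models A p e \<and> models A q e)"
| "models A (GOr p q) e = (models A p e \<or> models A q e)"
| "models A (GImp p q) e = (models A p e \<longrightarrow> models A q e)"
| "models A (GEx i p) e = (\<exists>a. models A p (e(i := a)))"
| "models A (GAll i p) e = (\<forall>a. models A p (e(i := a)))"

primrec term_vars :: "gterm \<Rightarrow> nat set" where
  "term_vars (GVar i) = {i}"
| "term_vars GOne = {}"
| "term_vars (GMul s t) = term_vars s \<union> term_vars t"

primrec free_vars :: "gform \<Rightarrow> nat set" where
  "free_vars (GEq s t) = term_vars s \<union> term_vars t"
| "free_vars GFalse = {}"
| "free_vars (GNot p) = free_vars p"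
| "free_vars (GAnd p q) = free_vars p \<union> free_vars q"
| "free_vars (GOr p q) = free_vars p \<union> free_vars q"
| "free_vars (GImp p q) = free_vars p \<union> free_vars q"
| "free_vars (GEx i p) = free_vars p - {i}"
| "free_vars (GAll i p) = free_vars p - {i}"

definition sentence :: "gform \<Rightarrow> bool" where
  "sentence p \<longleftrightarrow> free_vars p = {}"

definition Sat_set :: "gform \<Rightarrow> (nat \<Rightarrow> nat) \<Rightarrow> (nat \<times> nat \<Rightarrow> nat) set" where
  "Sat_set p e = {A \<in> GroupTables. models A p e}"

end

theory Submission
  imports Defs
begin

(* Satisfaction sets are Borel by induction on the formula: evaluating a term in a table inspects
   only finitely many entries, so atomic formulas define open sets, and connectives and quantifiers
   over the countable universe are Boolean operations and countable unions and intersections.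

   For the zero-one law, the group tables form a G-delta subset of the Polish space N^(N x N), so
   the space is Baire and Borel sets differ from open sets by meager sets. Relabelling the
   elements by a permutation fixing the identity is a homeomorphism that preserves the truth of
   sentences, and these relabellings act topologically transitively: the finitely many entries
   prescribed by two basic open sets both occur in the direct product of two groups, and
   relabelling moves either copy into place. A Borel set that is invariant under a topologically
   transitive family of homeomorphisms of a Baire space is meager or comeager. *)

lemma meager_in_empty [simp]: "meager_in X {}"
  unfolding meager_in_def nowhere_dense_in_def by auto

lemma meager_in_subset: "meager_in X T \<Longrightarrow> S \<subseteq> T \<Longrightarrow> meager_in X S"
  unfolding meager_in_def by blast

lemma meager_in_UN:
  assumes "\<And>i::nat. meager_in X (S i)"
  shows "meager_in X (\<Union>i. S i)"
proof -
  have "\<forall>i. \<exists>F :: nat \<Rightarrow> 'a set. (\<forall>n. nowhere_dense_in X (F n)) \<and> S i \<subseteq> (\<Union>n. F n)"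
    using assms unfolding meager_in_def by blast
  then obtain F :: "nat \<Rightarrow> nat \<Rightarrow> 'a set"
    where F: "\<And>i n. nowhere_dense_in X (F i n)" "\<And>i. S i \<subseteq> (\<Union>n. F i n)"
    by metis
  have "(\<Union>i. S i) \<subseteq> (\<Union>m. case_prod F (prod_decode m))"
  proof
    fix x assume "x \<in> (\<Union>i. S i)"
    then obtain i n where "x \<in> F i n" using F(2) by blast
    then show "x \<in> (\<Union>m. case_prod F (prod_decode m))"
      by (intro UN_I[of "prod_encode (i, n)"]) auto
  qed
  moreover have "(\<Union>i. S i) \<subseteq> topspace X"
    using assms unfolding meager_in_def by blast
  ultimately show ?thesis
    unfolding meager_in_def using F(1) by (metis case_prod_beta)
qed

lemma meager_in_Un:
  assumes "meager_in X S" "meager_in X T"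
  shows "meager_in X (S \<union> T)"
proof -
  have "S \<union> T = (\<Union>i::nat. if i = 0 then S else T)"
    by (auto split: if_splits)
  then show ?thesis
    using assms meager_in_UN[of X "\<lambda>i. if i = 0 then S else T"] by simp
qed

lemma nowhere_dense_in_imp_meager_in: "nowhere_dense_in X S \<Longrightarrow> meager_in X S"
  unfolding meager_in_def nowhere_dense_in_def by (intro conjI exI[of _ "\<lambda>_. S"]) auto

lemma meager_in_closure_of_diff:
  assumes "openin X U"
  shows "meager_in X (X closure_of U - U)"
proof -
  have "X interior_of (X closure_of U - U) = {}"
    unfolding interior_of_eq_empty
  proof (intro allI impI)
    fix T assume T: "openin X T \<and> T \<subseteq> X closure_of U - U"
    then have "T \<inter> X closure_of U = {}"
      using openin_Int_closure_of_eq_empty[of X T U] by blast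
    then show "T = {}" using T by blast
  qed
  moreover have "closedin X (X closure_of U - U)"
    using assms by (simp add: closedin_diff)
  ultimately have "nowhere_dense_in X (X closure_of U - U)"
    unfolding nowhere_dense_in_def by (simp add: closure_of_closedin closedin_subset)
  then show ?thesis
    by (rule nowhere_dense_in_imp_meager_in)
qed

lemma meager_in_image_homeomorphic_map:
  assumes f: "homeomorphic_map X Y f" and S: "meager_in X S"
  shows "meager_in Y (f ` S)"
proof -
  have nowhere_dense_image: "nowhere_dense_in Y (f ` N)" if "nowhere_dense_in X N" for N
  proof -
    have N: "N \<subseteq> topspace X" "X interior_of (X closure_of N) = {}"
      using that unfolding nowhere_dense_in_def by auto
    have "Y interior_of (Y closure_of (f ` N)) = f ` (X interior_of (X closure_of N))"
      using homeomorphic_map_closure_of[OF f N(1)]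
        homeomorphic_map_interior_of[OF f closure_of_subset_topspace] by simp
    moreover have "f ` N \<subseteq> topspace Y"
      using image_mono[OF N(1), of f] homeomorphic_imp_surjective_map[OF f] by simp
    ultimately show ?thesis
      unfolding nowhere_dense_in_def using N(2) by simp
  qed
  obtain F :: "nat \<Rightarrow> 'a set"
    where F: "\<And>n. nowhere_dense_in X (F n)" "S \<subseteq> (\<Union>n. F n)" "S \<subseteq> topspace X"
    using S unfolding meager_in_def by blast
  have "f ` S \<subseteq> topspace Y"
    using F(3) homeomorphic_imp_surjective_map[OF f] by blast
  moreover have "f ` S \<subseteq> (\<Union>n. f ` F n)"
    using F(2) by blast
  moreover have "\<forall>n. nowhere_dense_in Y (f ` F n)"
    using F(1) nowhere_dense_image by blast
  ultimately show ?thesis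
    unfolding meager_in_def by (intro conjI exI[of _ "\<lambda>n. f ` F n"]) auto
qed

lemma meager_in_preimage_homeomorphic_map:
  assumes f: "homeomorphic_map X Y f" and S: "meager_in Y S"
  shows "meager_in X {x \<in> topspace X. f x \<in> S}"
proof -
  obtain g where "homeomorphic_maps X Y f g"
    using f homeomorphic_map_maps by blast
  then have g: "homeomorphic_map Y X g" "\<And>x. x \<in> topspace X \<Longrightarrow> g (f x) = x"
    "\<And>y. y \<in> topspace Y \<Longrightarrow> f (g y) = y"
    by (simp_all add: homeomorphic_maps_map)
  have S_sub: "S \<subseteq> topspace Y"
    using S unfolding meager_in_def by blast
  have "{x \<in> topspace X. f x \<in> S} = g ` S"
  proof (intro equalityI subsetI)
    fix x assume x: "x \<in> {x \<in> topspace X. f x \<in> S}"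
    then have "x = g (f x)" using g(2) by simp
    then show "x \<in> g ` S" using x by blast
  next
    fix x assume "x \<in> g ` S"
    then obtain y where y: "y \<in> S" "x = g y" by blast
    then have "g y \<in> topspace X"
      using S_sub homeomorphic_imp_surjective_map[OF g(1)] by blast
    then show "x \<in> {x \<in> topspace X. f x \<in> S}"
      using y S_sub g(3) by auto
  qed
  then show ?thesis
    using meager_in_image_homeomorphic_map[OF g(1) S] by simp
qed

lemma meager_in_openin_empty:
  assumes X: "completely_metrizable_space X" and U: "openin X U" and M: "meager_in X U"
  shows "U = {}"
proof -
  obtain F :: "nat \<Rightarrow> 'a set" where F: "\<And>n. nowhere_dense_in X (F n)" "U \<subseteq> (\<Union>n. F n)"
    using M unfolding meager_in_def by blast
  have "X interior_of \<Union>(range (\<lambda>n. X closure_of F n)) = {}"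
  proof (rule Baire_category_alt)
    fix T assume "T \<in> range (\<lambda>n. X closure_of F n)"
    then obtain n where "T = X closure_of F n" by blast
    then show "closedin X T \<and> X interior_of T = {}"
      using F(1)[of n] unfolding nowhere_dense_in_def by simp
  qed (use X in simp_all)
  moreover have "U \<subseteq> \<Union>(range (\<lambda>n. X closure_of F n))"
  proof
    fix x assume "x \<in> U"
    then obtain n where "x \<in> F n" using F(2) by blast
    moreover have "F n \<subseteq> topspace X" using F(1)[of n] unfolding nowhere_dense_in_def by simp
    ultimately show "x \<in> \<Union>(range (\<lambda>n. X closure_of F n))"
      using closure_of_subset by blast
  qed
  ultimately show ?thesis
    using U interior_of_maximal by blast
qed

lemma sigma_algebra_borel_sets_of: "sigma_algebra (topspace X) (borel_sets_of X)"
  unfolding borel_sets_of_def by (rule sigma_algebra_sigma_sets) (auto dest: openin_subset)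

lemma borel_sets_of_openin: "openin X U \<Longrightarrow> U \<in> borel_sets_of X"
  unfolding borel_sets_of_def by (rule sigma_sets.Basic) simp

lemma borel_sets_of_subset: "S \<in> borel_sets_of X \<Longrightarrow> S \<subseteq> topspace X"
  unfolding borel_sets_of_def by (rule sigma_sets_into_sp) (auto dest: openin_subset)

lemma borel_sets_of_open_modulo_meager:
  assumes "S \<in> borel_sets_of X"
  shows "\<exists>U. openin X U \<and> meager_in X (S - U) \<and> meager_in X (U - S)"
  using assms unfolding borel_sets_of_def
proof (induction rule: sigma_sets.induct)
  case (Basic a)
  then show ?case by (intro exI[of _ a]) simp
next
  case Empty
  then show ?case by (intro exI[of _ "{}"]) simp
next
  case (Compl a)
  then obtain U where U: "openin X U" "meager_in X (a - U)" "meager_in X (U - a)"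
    by blast
  let ?V = "topspace X - X closure_of U"
  have "a \<subseteq> topspace X"
    using Compl(1) borel_sets_of_subset unfolding borel_sets_of_def by blast
  then have "(topspace X - a) - ?V \<subseteq> (U - a) \<union> (X closure_of U - U)" and "?V - (topspace X - a) \<subseteq> a - U"
    using closure_of_subset[OF openin_subset[OF U(1)]] by auto
  then have "openin X ?V \<and> meager_in X ((topspace X - a) - ?V) \<and> meager_in X (?V - (topspace X - a))"
    using meager_in_subset[OF meager_in_Un[OF U(3) meager_in_closure_of_diff[OF U(1)]]]
      meager_in_subset[OF U(2)] by (simp add: openin_diff)
  then show ?case ..
next
  case (Union a)
  then have "\<forall>i. \<exists>U. openin X U \<and> meager_in X (a i - U) \<and> meager_in X (U - a i)"
    by blast
  then obtain U where U: "\<And>i. openin X (U i)" "\<And>i. meager_in X (a i - U i)" "\<And>i. meager_in X (U i - a i)"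
    by metis
  have "meager_in X ((\<Union>i. a i) - (\<Union>i. U i))"
    by (rule meager_in_subset[OF meager_in_UN[of X "\<lambda>i. a i - U i", OF U(2)]]) blast
  moreover have "meager_in X ((\<Union>i. U i) - (\<Union>i. a i))"
    by (rule meager_in_subset[OF meager_in_UN[of X "\<lambda>i. U i - a i", OF U(3)]]) blast
  moreover have "openin X (\<Union>i. U i)"
    using U(1) by blast
  ultimately have "openin X (\<Union>i. U i) \<and> meager_in X ((\<Union>i. a i) - (\<Union>i. U i))
      \<and> meager_in X ((\<Union>i. U i) - (\<Union>i. a i))"
    by blast
  then show ?case ..
qed

lemma topological_zero_one_law:
  assumes X: "completely_metrizable_space X"
    and S: "S \<in> borel_sets_of X"
    and homeo: "\<And>h. h \<in> H \<Longrightarrow> homeomorphic_map X X h"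
    and invariant: "\<And>h x. h \<in> H \<Longrightarrow> x \<in> topspace X \<Longrightarrow> h x \<in> S \<longleftrightarrow> x \<in> S"
    and transitive: "\<And>U V. \<lbrakk>openin X U; openin X V; U \<noteq> {}; V \<noteq> {}\<rbrakk> \<Longrightarrow> \<exists>h\<in>H. \<exists>x\<in>V. h x \<in> U"
  shows "meager_in X S \<or> comeager_in X S"
proof -
  obtain U where U: "openin X U" "meager_in X (S - U)" "meager_in X (U - S)"
    using borel_sets_of_open_modulo_meager[OF S] by blast
  define W where "W = topspace X - X closure_of U"
  have W: "openin X W"
    unfolding W_def by (simp add: openin_diff)
  consider "U = {}" | "W = {}"
  proof (rule ccontr)
    assume "\<not> ?thesis"
    then have "U \<noteq> {}" "W \<noteq> {}" using that by blast+
    then obtain h x where h: "h \<in> H" and x: "x \<in> W" "h x \<in> U"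
      using transitive[OF U(1) W] by blast
    text \<open>On the open set V, S agrees with U up to the meager set S - U, while h carries
      V - S into the meager set U - S; so V is meager.\<close>
    define V where "V = W \<inter> {y \<in> topspace X. h y \<in> U}"
    have "openin X V"
      unfolding V_def using W U(1) homeo[OF h]
      by (intro openin_Int openin_continuous_map_preimage) (auto dest: homeomorphic_imp_continuous_map)
    moreover have "V \<subseteq> (S - U) \<union> {y \<in> topspace X. h y \<in> U - S}"
    proof
      fix y assume y: "y \<in> V"
      then have "y \<notin> U"
        using closure_of_subset[OF openin_subset[OF U(1)]] unfolding V_def W_def by blast
      then show "y \<in> (S - U) \<union> {y \<in> topspace X. h y \<in> U - S}"
        using y invariant[OF h] unfolding V_def by blast
    qed
    then have "meager_in X V"
      using meager_in_Un[OF U(2) meager_in_preimage_homeomorphic_map[OF homeo[OF h] U(3)]]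
      by (rule meager_in_subset[rotated])
    ultimately have "V = {}"
      using meager_in_openin_empty[OF X] by blast
    moreover have "x \<in> V"
      using x W openin_subset unfolding V_def by blast
    ultimately show False by blast
  qed
  then show ?thesis
  proof cases
    case 1
    then have "meager_in X S" using U(2) by simp
    then show ?thesis ..
  next
    case 2
    then have "topspace X - S \<subseteq> (U - S) \<union> (X closure_of U - U)"
      unfolding W_def by blast
    then have "meager_in X (topspace X - S)"
      using meager_in_Un[OF U(3) meager_in_closure_of_diff[OF U(1)]] meager_in_subset by blast
    then show ?thesis
      unfolding comeager_in_def using borel_sets_of_subset[OF S] by blast
  qed
qed

type_synonym table = "nat \<times> nat \<Rightarrow> nat"

lemma topspace_table_space [simp]: "topspace table_space = UNIV"
  by (simp add: table_space_def)

lemma topspace_group_space [simp]: "topspace group_space = GroupTables"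
  by (simp add: group_space_def)

lemma openin_table_space_entry: "openin table_space {A. A q = c}"
proof -
  have "continuous_map table_space (discrete_topology UNIV) (\<lambda>A. A q)"
    unfolding table_space_def by (rule continuous_map_product_projection) simp
  then have "openin table_space {A \<in> topspace table_space. A q \<in> {c}}"
    by (rule openin_continuous_map_preimage) simp
  then show ?thesis by simp
qed

lemma openin_term_eval_eq_const: "openin table_space {A. term_eval A e t = c}"
proof (induction t arbitrary: c)
  case (GVar i)
  then show ?case using openin_topspace[of table_space] by (cases "e i = c") simp_all
next
  case GOne
  then show ?case using openin_topspace[of table_space] by (cases "c = 0") simp_all
next
  case (GMul s t)
  have "{A. term_eval A e (GMul s t) = c} =
      (\<Union>a b. {A. term_eval A e s = a} \<inter> {A. term_eval A e t = b} \<inter> {A. A (a, b) = c})"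
    by auto
  then show ?case
    using GMul.IH openin_table_space_entry by (auto intro!: openin_Union openin_Int)
qed

lemma openin_term_eval_eq: "openin table_space {A. term_eval A e s = term_eval A e t}"
proof -
  have "{A. term_eval A e s = term_eval A e t} =
      (\<Union>c. {A. term_eval A e s = c} \<inter> {A. term_eval A e t = c})"
    by auto
  then show ?thesis
    using openin_term_eval_eq_const by (auto intro!: openin_Union openin_Int)
qed

lemma Sat_set_borel: "Sat_set \<phi> e \<in> borel_sets_of group_space"
proof -
  interpret borel: sigma_algebra GroupTables "borel_sets_of group_space"
    using sigma_algebra_borel_sets_of[of group_space] by simp
  show ?thesis
  proof (induction \<phi> arbitrary: e)
    case (GEq s t)
    have "openin group_space ({A. term_eval A e s = term_eval A e t} \<inter> GroupTables)"
      unfolding group_space_def using openin_term_eval_eq by (rule openin_subtopology_Int)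
    moreover have "Sat_set (GEq s t) e = {A. term_eval A e s = term_eval A e t} \<inter> GroupTables"
      by (auto simp: Sat_set_def)
    ultimately show ?case
      by (simp add: borel_sets_of_openin)
  next
    case (GNot p)
    have "Sat_set (GNot p) e = GroupTables - Sat_set p e"
      by (auto simp: Sat_set_def)
    then show ?case using GNot by auto
  next
    case (GAnd p q)
    have "Sat_set (GAnd p q) e = Sat_set p e \<inter> Sat_set q e"
      by (auto simp: Sat_set_def)
    then show ?case using GAnd by auto
  next
    case (GOr p q)
    have "Sat_set (GOr p q) e = Sat_set p e \<union> Sat_set q e"
      by (auto simp: Sat_set_def)
    then show ?case using GOr by auto
  next
    case (GImp p q)
    have "Sat_set (GImp p q) e = (GroupTables - Sat_set p e) \<union> Sat_set q e"
      by (auto simp: Sat_set_def)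
    then show ?case using GImp by auto
  next
    case (GEx i p)
    have "Sat_set (GEx i p) e = (\<Union>a. Sat_set p (e(i := a)))"
      by (auto simp: Sat_set_def)
    then show ?case using GEx by auto
  next
    case (GAll i p)
    have "Sat_set (GAll i p) e = (\<Inter>a. Sat_set p (e(i := a)))"
      by (auto simp: Sat_set_def)
    then show ?case using GAll by auto
  qed (simp add: Sat_set_def)
qed

lemma gdelta_in_GroupTables: "gdelta_in table_space GroupTables"
proof -
  define assoc :: "nat \<times> nat \<times> nat \<Rightarrow> table set"
    where "assoc = (\<lambda>(x, y, z). {A. A (A (x, y), z) = A (x, A (y, z))})"
  define unit :: "nat \<Rightarrow> table set"
    where "unit x = {A. A (0, x) = x \<and> A (x, 0) = x}" for x
  define inverse :: "nat \<Rightarrow> table set"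
    where "inverse x = {A. \<exists>y. A (x, y) = 0 \<and> A (y, x) = 0}" for x
  have "openin table_space (assoc p)" for p
  proof -
    obtain x y z where p: "p = (x, y, z)" by (cases p)
    show ?thesis
      using openin_term_eval_eq[of "\<lambda>i. [x, y, z] ! i"
          "GMul (GMul (GVar 0) (GVar 1)) (GVar 2)" "GMul (GVar 0) (GMul (GVar 1) (GVar 2))"]
      by (simp add: assoc_def p)
  qed
  moreover have "openin table_space (unit x)" for x
    using openin_Int[OF openin_term_eval_eq[of "\<lambda>_. x" "GMul GOne (GVar 0)" "GVar 0"]
        openin_term_eval_eq[of "\<lambda>_. x" "GMul (GVar 0) GOne" "GVar 0"]]
    by (simp add: unit_def Collect_conj_eq)
  moreover have "openin table_space (inverse x)" for x
  proof -
    have "openin table_space {A. A (x, y) = 0 \<and> A (y, x) = 0}" for y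
      using openin_Int[OF openin_term_eval_eq[of "\<lambda>i. [x, y] ! i" "GMul (GVar 0) (GVar 1)" GOne]
          openin_term_eval_eq[of "\<lambda>i. [x, y] ! i" "GMul (GVar 1) (GVar 0)" GOne]]
      by (simp add: Collect_conj_eq)
    then show ?thesis
      unfolding inverse_def Collect_ex_eq by blast
  qed
  ultimately have "gdelta_in table_space (\<Inter>(range assoc) \<inter> \<Inter>(range unit) \<inter> \<Inter>(range inverse))"
    by (intro gdelta_in_Int gdelta_in_Inter) (auto intro: open_imp_gdelta_in)
  moreover have "GroupTables = \<Inter>(range assoc) \<inter> \<Inter>(range unit) \<inter> \<Inter>(range inverse)"
    unfolding GroupTables_def is_group_table_def assoc_def unit_def inverse_def by auto
  ultimately show ?thesis
    by simp
qed

lemma completely_metrizable_space_group_space: "completely_metrizable_space group_space"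
proof -
  have "completely_metrizable_space table_space"
    unfolding table_space_def completely_metrizable_space_product_topology
    by (simp add: completely_metrizable_space_discrete_topology)
  then show ?thesis
    unfolding group_space_def using gdelta_in_GroupTables by (rule completely_metrizable_space_gdelta_in)
qed

definition relabel :: "(nat \<Rightarrow> nat) \<Rightarrow> table \<Rightarrow> table" where
  "relabel p A = (\<lambda>(x, y). p (A (inv p x, inv p y)))"

lemma relabel_apply: "relabel p A (x, y) = p (A (inv p x, inv p y))"
  by (simp add: relabel_def)

lemma relabel_compose:
  assumes "bij p" "bij q"
  shows "relabel p (relabel q A) = relabel (p \<circ> q) A"
  using assms by (simp add: relabel_def fun_eq_iff o_inv_distrib bij_is_inj)

lemma relabel_inv:
  assumes "bij p"
  shows "relabel (inv p) (relabel p A) = A"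
  using assms by (simp add: relabel_def fun_eq_iff inv_inv_eq bij_is_inj)

lemma relabel_GroupTables:
  assumes p: "bij p" "p 0 = 0" and A: "A \<in> GroupTables"
  shows "relabel p A \<in> GroupTables"
proof -
  have inv_p: "\<And>x. inv p (p x) = x" "\<And>x. p (inv p x) = x" "inv p 0 = 0"
    using p by (simp_all add: bij_is_inj bij_is_surj surj_f_inv_f inv_f_eq)
  have "\<exists>y. relabel p A (x, y) = 0 \<and> relabel p A (y, x) = 0" for x
  proof -
    obtain y where "A (inv p x, y) = 0" "A (y, inv p x) = 0"
      using A unfolding GroupTables_def is_group_table_def by blast
    then show ?thesis
      by (intro exI[of _ "p y"]) (simp add: relabel_apply inv_p p(2))
  qed
  with A show ?thesis
    unfolding GroupTables_def is_group_table_def by (simp add: relabel_apply inv_p)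
qed

lemma continuous_map_relabel: "continuous_map table_space table_space (relabel p)"
  unfolding table_space_def continuous_map_componentwise_UNIV
proof
  fix q :: "nat \<times> nat"
  have "continuous_map (product_topology (\<lambda>_. discrete_topology UNIV) UNIV) (discrete_topology UNIV)
      (\<lambda>A. A (inv p (fst q), inv p (snd q)))"
    by (rule continuous_map_product_projection) simp
  then have "continuous_map (product_topology (\<lambda>_. discrete_topology UNIV) UNIV) (discrete_topology UNIV)
      (p \<circ> (\<lambda>A. A (inv p (fst q), inv p (snd q))))"
    by (rule continuous_map_compose) simp
  then show "continuous_map (product_topology (\<lambda>_. discrete_topology UNIV) UNIV) (discrete_topology UNIV)
      (\<lambda>A. relabel p A q)"
    by (simp add: relabel_def case_prod_beta o_def)
qed

lemma homeomorphic_map_relabel: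
  assumes "bij p" "p 0 = 0"
  shows "homeomorphic_map group_space group_space (relabel p)"
proof -
  have inv_p: "bij (inv p)" "inv p 0 = 0"
    using assms by (simp_all add: bij_imp_bij_inv bij_is_inj inv_f_eq)
  have "continuous_map group_space group_space (relabel q)" if "bij q" "q 0 = 0" for q
    unfolding group_space_def continuous_map_in_subtopology
    using continuous_map_from_subtopology[OF continuous_map_relabel] relabel_GroupTables[OF that]
    by (auto simp: group_space_def)
  then have "homeomorphic_maps group_space group_space (relabel p) (relabel (inv p))"
    unfolding homeomorphic_maps_def
    using assms inv_p relabel_inv[OF assms(1)] relabel_inv[OF inv_p(1)] by (simp add: inv_inv_eq)
  then show ?thesis
    by (rule homeomorphic_maps_imp_map)
qed

lemma term_eval_relabel:
  assumes "bij p" "p 0 = 0"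
  shows "term_eval (relabel p A) (p \<circ> e) t = p (term_eval A e t)"
  using assms by (induction t) (simp_all add: relabel_apply bij_is_inj)

lemma models_relabel:
  assumes p: "bij p" "p 0 = 0"
  shows "models (relabel p A) \<phi> (p \<circ> e) = models A \<phi> e"
proof (induction \<phi> arbitrary: e)
  case (GEq s t)
  show ?case
    using p by (simp only: models.simps term_eval_relabel[OF p]) (simp add: bij_is_inj inj_eq)
next
  case (GEx i \<phi>)
  have upd: "(p \<circ> e)(i := a) = p \<circ> e(i := inv p a)" for a
    using p by (simp add: fun_eq_iff bij_is_surj surj_f_inv_f)
  have "models (relabel p A) (GEx i \<phi>) (p \<circ> e) \<longleftrightarrow> (\<exists>a. models A \<phi> (e(i := inv p a)))"
    by (simp only: models.simps upd GEx.IH)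
  also have "\<dots> \<longleftrightarrow> models A (GEx i \<phi>) e"
    using p by (metis bij_is_inj inv_f_f models.simps(7))
  finally show ?case .
next
  case (GAll i \<phi>)
  have upd: "(p \<circ> e)(i := a) = p \<circ> e(i := inv p a)" for a
    using p by (simp add: fun_eq_iff bij_is_surj surj_f_inv_f)
  have "models (relabel p A) (GAll i \<phi>) (p \<circ> e) \<longleftrightarrow> (\<forall>a. models A \<phi> (e(i := inv p a)))"
    by (simp only: models.simps upd GAll.IH)
  also have "\<dots> \<longleftrightarrow> models A (GAll i \<phi>) e"
    using p by (metis bij_is_inj inv_f_f models.simps(8))
  finally show ?case .
qed simp_all

lemma term_eval_cong: "(\<And>i. i \<in> term_vars t \<Longrightarrow> e i = e' i) \<Longrightarrow> term_eval A e t = term_eval A e' t"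
  by (induction t) simp_all

lemma models_cong: "(\<And>i. i \<in> free_vars \<phi> \<Longrightarrow> e i = e' i) \<Longrightarrow> models A \<phi> e = models A \<phi> e'"
proof (induction \<phi> arbitrary: e e')
  case (GEq s t)
  have "term_eval A e s = term_eval A e' s" "term_eval A e t = term_eval A e' t"
    using GEq.prems by (auto intro!: term_eval_cong)
  then show ?case by simp
next
  case (GNot p)
  have "models A p e = models A p e'"
    using GNot.prems by (auto intro!: GNot.IH)
  then show ?case by simp
next
  case (GAnd p q)
  have "models A p e = models A p e'" "models A q e = models A q e'"
    using GAnd.prems by (auto intro!: GAnd.IH)
  then show ?case by simp
next
  case (GOr p q)
  have "models A p e = models A p e'" "models A q e = models A q e'"
    using GOr.prems by (auto intro!: GOr.IH)
  then show ?case by simp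
next
  case (GImp p q)
  have "models A p e = models A p e'" "models A q e = models A q e'"
    using GImp.prems by (auto intro!: GImp.IH)
  then show ?case by simp
next
  case (GEx i p)
  have "models A p (e(i := a)) = models A p (e'(i := a))" for a
    using GEx.prems by (auto intro!: GEx.IH)
  then show ?case by simp
next
  case (GAll i p)
  have "models A p (e(i := a)) = models A p (e'(i := a))" for a
    using GAll.prems by (auto intro!: GAll.IH)
  then show ?case by simp
qed simp

lemma sentence_models_relabel:
  assumes "sentence \<phi>" "bij p" "p 0 = 0"
  shows "models (relabel p A) \<phi> e = models A \<phi> e"
  using models_relabel[OF assms(2,3)] models_cong[of \<phi> e "p \<circ> e"] assms(1)
  by (simp add: sentence_def)

lemma relabel_Sat_set_iff:
  assumes "sentence \<phi>" "bij p" "p 0 = 0" "A \<in> GroupTables"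
  shows "relabel p A \<in> Sat_set \<phi> e \<longleftrightarrow> A \<in> Sat_set \<phi> e"
  using assms relabel_GroupTables sentence_models_relabel by (simp add: Sat_set_def)

definition cylinder :: "(nat \<times> nat) set \<Rightarrow> table \<Rightarrow> table set" where
  "cylinder F A = {B. \<forall>q\<in>F. B q = A q}"

lemma openin_group_space_contains_cylinder:
  assumes "openin group_space U" "A \<in> U"
  obtains F where "finite F" "cylinder F A \<inter> GroupTables \<subseteq> U"
proof -
  obtain V where V: "openin table_space V" "U = V \<inter> GroupTables"
    using assms(1) unfolding group_space_def openin_subtopology by blast
  then obtain X :: "nat \<times> nat \<Rightarrow> nat set" where X: "A \<in> (\<Pi>\<^sub>E q\<in>UNIV. X q)"
      "finite {q. X q \<noteq> UNIV}" "(\<Pi>\<^sub>E q\<in>UNIV. X q) \<subseteq> V"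
    using product_topology_open_contains_basis[of "\<lambda>_. discrete_topology UNIV" UNIV V A] assms(2)
    unfolding table_space_def by auto
  have "cylinder {q. X q \<noteq> UNIV} A \<subseteq> (\<Pi>\<^sub>E q\<in>UNIV. X q)"
    using X(1) unfolding cylinder_def by (auto simp: PiE_iff) (metis UNIV_I)
  then show ?thesis
    using that X(2,3) V(2) by blast
qed

lemma finite_inj_on_extends_to_bij:
  fixes h :: "nat \<Rightarrow> nat"
  assumes K: "finite K" and h: "inj_on h K"
  obtains g where "bij g" "\<And>k. k \<in> K \<Longrightarrow> g k = h k"
proof -
  define f where "f = enumerate (- h ` K) \<circ> inv_into UNIV (enumerate (- K))"
  define g where "g x = (if x \<in> K then h x else f x)" for x
  have "infinite (- K)" "infinite (- h ` K)"
    using K by (simp_all add: Compl_eq_Diff_UNIV Diff_infinite_finite)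
  then have "bij_betw f (- K) (- h ` K)"
    unfolding f_def using bij_betw_trans[OF bij_betw_inv_into[OF bij_enumerate] bij_enumerate] by blast
  then have "bij_betw g (- K) (- h ` K)"
    by (subst bij_betw_cong[of "- K" g f]) (simp_all add: g_def)
  moreover have "bij_betw g K (h ` K)"
    using inj_on_imp_bij_betw[OF h] by (subst bij_betw_cong[of K g h]) (simp_all add: g_def)
  ultimately have "bij_betw g (K \<union> - K) (h ` K \<union> - h ` K)"
    by (intro bij_betw_combine) simp_all
  then show ?thesis
    using that[of g] by (simp add: g_def)
qed

definition product_table :: "table \<Rightarrow> table \<Rightarrow> table" where
  "product_table A1 A2 = (\<lambda>(x, y).
     prod_encode (A1 (fst (prod_decode x), fst (prod_decode y)), A2 (snd (prod_decode x), snd (prod_decode y))))"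

lemma product_table_encode [simp]:
  "product_table A1 A2 (prod_encode (a, b), prod_encode (c, d)) = prod_encode (A1 (a, c), A2 (b, d))"
  by (simp add: product_table_def)

lemma prod_encode_0 [simp]: "prod_encode (0, 0) = 0"
  by (simp add: prod_encode_def)

lemma prod_decode_0 [simp]: "prod_decode 0 = (0, 0)"
  by (metis prod_encode_inverse prod_encode_0)

lemma product_table_GroupTables:
  assumes "A1 \<in> GroupTables" "A2 \<in> GroupTables"
  shows "product_table A1 A2 \<in> GroupTables"
proof -
  let ?P = "product_table A1 A2"
  have assoc: "A1 (A1 (x, y), z) = A1 (x, A1 (y, z))" "A2 (A2 (x, y), z) = A2 (x, A2 (y, z))"
    and unit: "A1 (0, x) = x" "A1 (x, 0) = x" "A2 (0, x) = x" "A2 (x, 0) = x"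
    and inverse: "\<exists>y. A1 (x, y) = 0 \<and> A1 (y, x) = 0" "\<exists>y. A2 (x, y) = 0 \<and> A2 (y, x) = 0"
    for x y z
    using assms by (simp_all add: GroupTables_def is_group_table_def)
  have "\<exists>y. ?P (x, y) = 0 \<and> ?P (y, x) = 0" for x
  proof -
    obtain a b where x: "x = prod_encode (a, b)"
      by (metis prod_decode_inverse surj_pair)
    obtain a' b' where "A1 (a, a') = 0 \<and> A1 (a', a) = 0" "A2 (b, b') = 0 \<and> A2 (b', b) = 0"
      using inverse by metis
    then have "?P (x, prod_encode (a', b')) = 0 \<and> ?P (prod_encode (a', b'), x) = 0"
      by (simp add: x)
    then show ?thesis ..
  qed
  then show ?thesis
    unfolding GroupTables_def is_group_table_def
    by (simp add: product_table_def assoc unit)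
qed

lemma relabel_inv_into_cylinder:
  assumes F: "finite F" and h: "inj h" "h 0 = 0"
    and hom: "\<And>a c. (a, c) \<in> F \<Longrightarrow> P (h a, h c) = h (A (a, c))"
  obtains g where "bij g" "g 0 = 0" "relabel (inv g) P \<in> cylinder F A"
proof -
  let ?K = "{0} \<union> fst ` F \<union> snd ` F \<union> A ` F"
  obtain g where g: "bij g" "\<And>k. k \<in> ?K \<Longrightarrow> g k = h k"
    using finite_inj_on_extends_to_bij[of ?K h] F h(1) inj_on_subset by blast
  have "relabel (inv g) P q = A q" if "q \<in> F" for q
  proof -
    obtain a c where q: "q = (a, c)" by (cases q)
    then have "a \<in> ?K" "c \<in> ?K" "A (a, c) \<in> ?K"
      using that by force+
    then have "P (g a, g c) = g (A (a, c))"
      using g(2) hom that q by simp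
    then show ?thesis
      using g(1) by (simp add: q relabel_apply inv_inv_eq bij_is_inj)
  qed
  then have "relabel (inv g) P \<in> cylinder F A"
    by (simp add: cylinder_def)
  moreover have "g 0 = 0"
    using g(2) h(2) by simp
  ultimately show ?thesis
    using that g(1) by blast
qed

lemma relabel_meets_cylinders:
  assumes A: "A1 \<in> GroupTables" "A2 \<in> GroupTables" and F: "finite F1" "finite F2"
  obtains p B where "bij p" "p 0 = 0" "B \<in> GroupTables \<inter> cylinder F2 A2" "relabel p B \<in> cylinder F1 A1"
proof -
  let ?P = "product_table A1 A2"
  have unit: "A1 (0, 0) = 0" "A2 (0, 0) = 0"
    using A by (simp_all add: GroupTables_def is_group_table_def)
  obtain g1 where g1: "bij g1" "g1 0 = 0" "relabel (inv g1) ?P \<in> cylinder F1 A1"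
    by (rule relabel_inv_into_cylinder[OF F(1), where h = "\<lambda>a. prod_encode (a, 0)" and P = ?P and A = A1])
      (auto simp: inj_def unit)
  obtain g2 where g2: "bij g2" "g2 0 = 0" "relabel (inv g2) ?P \<in> cylinder F2 A2"
    by (rule relabel_inv_into_cylinder[OF F(2), where h = "\<lambda>b. prod_encode (0, b)" and P = ?P and A = A2])
      (auto simp: inj_def unit)
  have inv_g: "bij (inv g1)" "inv g1 0 = 0" "bij (inv g2)" "inv g2 0 = 0"
    using g1 g2 by (simp_all add: bij_imp_bij_inv bij_is_inj inv_f_eq)
  have "g2 \<circ> inv g2 = id"
    using surj_iff g2(1) bij_is_surj by blast
  then have "relabel (inv g1 \<circ> g2) (relabel (inv g2) ?P) = relabel (inv g1) ?P"
    using g2(1) inv_g by (simp add: relabel_compose bij_comp comp_assoc)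
  moreover have "relabel (inv g2) ?P \<in> GroupTables"
    using relabel_GroupTables[OF inv_g(3,4) product_table_GroupTables[OF A]] .
  moreover have "bij (inv g1 \<circ> g2)" "(inv g1 \<circ> g2) 0 = 0"
    using g2 inv_g by (simp_all add: bij_comp)
  ultimately show ?thesis
    using that g1(3) g2(3) by simp
qed

lemma relabel_topologically_transitive:
  assumes U: "openin group_space U" "U \<noteq> {}" and V: "openin group_space V" "V \<noteq> {}"
  shows "\<exists>p. bij p \<and> p 0 = 0 \<and> (\<exists>B\<in>V. relabel p B \<in> U)"
proof -
  obtain A1 A2 where A: "A1 \<in> U" "A2 \<in> V"
    using U(2) V(2) by blast
  then have G: "A1 \<in> GroupTables" "A2 \<in> GroupTables"
    using openin_subset[OF U(1)] openin_subset[OF V(1)] by auto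
  obtain F1 where F1: "finite F1" "cylinder F1 A1 \<inter> GroupTables \<subseteq> U"
    using openin_group_space_contains_cylinder[OF U(1) A(1)] by blast
  obtain F2 where F2: "finite F2" "cylinder F2 A2 \<inter> GroupTables \<subseteq> V"
    using openin_group_space_contains_cylinder[OF V(1) A(2)] by blast
  obtain p B where p: "bij p" "p 0 = 0"
    and B: "B \<in> GroupTables \<inter> cylinder F2 A2" "relabel p B \<in> cylinder F1 A1"
    by (rule relabel_meets_cylinders[OF G F1(1) F2(1)])
  then have "relabel p B \<in> GroupTables"
    using relabel_GroupTables by blast
  then show ?thesis
    using p B F1(2) F2(2) by blast
qed

theorem theorem5p8:
  fixes \<phi> :: gform and e :: "nat \<Rightarrow> nat"
  shows "Sat_set \<phi> e \<in> borel_sets_of group_space \<and>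
         (sentence \<phi> \<longrightarrow>
            meager_in group_space (Sat_set \<phi> e) \<or> comeager_in group_space (Sat_set \<phi> e))"
proof (intro conjI impI)
  show "Sat_set \<phi> e \<in> borel_sets_of group_space"
    by (rule Sat_set_borel)
  assume "sentence \<phi>"
  let ?H = "{relabel p | p. bij p \<and> p 0 = 0}"
  show "meager_in group_space (Sat_set \<phi> e) \<or> comeager_in group_space (Sat_set \<phi> e)"
  proof (rule topological_zero_one_law[where H = ?H])
    show "completely_metrizable_space group_space"
      by (rule completely_metrizable_space_group_space)
    show "Sat_set \<phi> e \<in> borel_sets_of group_space"
      by (rule Sat_set_borel)
    show "homeomorphic_map group_space group_space h" if "h \<in> ?H" for h
      using that homeomorphic_map_relabel by blast
    show "h A \<in> Sat_set \<phi> e \<longleftrightarrow> A \<in> Sat_set \<phi> e"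
      if "h \<in> ?H" "A \<in> topspace group_space" for h A
      using that relabel_Sat_set_iff[OF \<open>sentence \<phi>\<close>] by auto
    show "\<exists>h\<in>?H. \<exists>B\<in>V. h B \<in> U"
      if "openin group_space U" "openin group_space V" "U \<noteq> {}" "V \<noteq> {}" for U V
      using relabel_topologically_transitive[OF that(1,3,2,4)] by blast
  qed
qed

end
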